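(* Let $n\ge2$ and let $N$ be a monoid containing elements $s_1,\dots,s_{n-1},a$ satisfying $s_i^2=1$, $(s_is_{i+1})^3=1$ for $1\le i\le n-2$, $(s_is_j)^2=1$ for $|i-j|\ge2$, and $s_ia=as_i$ for $2\le i\le n-1$. Define $\alpha_1=a$ and $\alpha_j=(s_{j-1}\cdots s_1)a(s_1\cdots s_{j-1})$ for $2\le j\le n$, and for $1\le i\le n-1$, $1\le j\le n$ let $\alpha_j^{s_i}=\alpha_{j-1}$ if $i=j-1$, $\alpha_j^{s_i}=\alpha_{j+1}$ if $i=j$, and $\alpha_j^{s_i}=\alpha_j$ otherwise. Then $s_i\alpha_j=\alpha_j^{s_i}s_i$ in $N$ for all $1\le i\le n-1$ and $1\le j\le n$. *)

theory Defs
  imports Main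
begin

definition alpha :: "(nat \<Rightarrow> 'a::monoid_mult) \<Rightarrow> 'a \<Rightarrow> nat \<Rightarrow> 'a" where
  "alpha s a j = prod_list (map s (rev [1..<j])) * a * prod_list (map s [1..<j])"

definition alpha_act :: "(nat \<Rightarrow> 'a::monoid_mult) \<Rightarrow> 'a \<Rightarrow> nat \<Rightarrow> nat \<Rightarrow> 'a" where
  "alpha_act s a i j = (if i = j - 1 then alpha s a (j - 1)
                        else if i = j then alpha s a (j + 1)
                        else alpha s a j)"

end

theory Submission
  imports Defs
begin

text \<open>Since \<open>\<alpha>(j+1) = s(j) \<alpha>(j) s(j)\<close>, the cases \<open>i = j - 1\<close> and \<open>i = j\<close> need only
  \<open>s(i)\<^sup>2 = 1\<close>, and for \<open>i > j\<close> the generator \<open>s(i)\<close> commutes with \<open>a\<close> and with every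
  \<open>s(k)\<close> occurring in \<open>\<alpha>(j)\<close>. For \<open>j \<ge> i + 2\<close> one inducts on \<open>j\<close>: passing through
  \<open>s(i+1) s(i)\<close>, the braid relation turns \<open>s(i)\<close> into \<open>s(i+1)\<close>, which commutes with \<open>\<alpha>(i)\<close>,
  and on the way out it turns back into \<open>s(i)\<close>; every further conjugating factor \<open>s(j)\<close>
  commutes with \<open>s(i)\<close>.\<close>

lemma involutions_commute:
  fixes x y :: "'a::monoid_mult"
  assumes "x * x = 1" "y * y = 1" "(x * y) ^ 2 = 1"
  shows "x * y = y * x"
proof -
  have "x * y = x * y * (x * (y * y) * x)" using assms(1,2) by (simp add: mult.assoc)
  also have "\<dots> = (x * y) ^ 2 * y * x" by (simp add: power2_eq_square mult.assoc)
  finally show ?thesis using assms(3) by simp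
qed

lemma involutions_braid:
  fixes x y :: "'a::monoid_mult"
  assumes "x * x = 1" "y * y = 1" "(x * y) ^ 3 = 1"
  shows "x * y * x = y * x * y"
proof -
  have "x * y * x = x * y * x * (y * x * (y * y) * x * y)" using assms(1,2) by (simp add: mult.assoc)
  also have "\<dots> = (x * y) ^ 3 * y * x * y" by (simp add: numeral_3_eq_3 mult.assoc)
  finally show ?thesis using assms(3) by simp
qed

lemma commute_prod_list:
  fixes x :: "'a::monoid_mult"
  assumes "\<And>y. y \<in> set ys \<Longrightarrow> x * y = y * x"
  shows "x * prod_list ys = prod_list ys * x"
  using assms
proof (induction ys)
  case (Cons y ys)
  have "x * prod_list (y # ys) = (x * y) * prod_list ys" by (simp add: mult.assoc)
  also have "\<dots> = y * (x * prod_list ys)" using Cons by (simp add: mult.assoc)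
  also have "\<dots> = prod_list (y # ys) * x" using Cons by (simp add: mult.assoc)
  finally show ?case .
qed simp

lemma alpha_Suc:
  assumes "1 \<le> k"
  shows "alpha s a (Suc k) = s k * alpha s a k * s k"
  using assms by (simp add: alpha_def mult.assoc)

lemma commute_alpha:
  fixes x :: "'a::monoid_mult"
  assumes "x * a = a * x" and "\<And>k. 1 \<le> k \<Longrightarrow> k < j \<Longrightarrow> x * s k = s k * x"
  shows "x * alpha s a j = alpha s a j * x"
proof -
  have commute_xs: "x * prod_list (map s xs) = prod_list (map s xs) * x" if "set xs = {1..<j}" for xs
    by (rule commute_prod_list) (use that assms(2) in auto)
  define P Q where "P = prod_list (map s (rev [1..<j]))" and "Q = prod_list (map s [1..<j])"
  have "x * alpha s a j = (x * P) * a * Q" by (simp add: alpha_def P_def Q_def mult.assoc)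
  also have "\<dots> = P * (x * a) * Q" using commute_xs[of "rev [1..<j]"] by (simp add: P_def mult.assoc)
  also have "\<dots> = P * a * (x * Q)" using assms(1) by (simp add: mult.assoc)
  also have "\<dots> = alpha s a j * x"
    using commute_xs[of "[1..<j]"] by (simp add: alpha_def P_def Q_def mult.assoc)
  finally show ?thesis .
qed

lemma mult_alpha_Suc:
  assumes "1 \<le> k" "s k * s k = 1"
  shows "s k * alpha s a (Suc k) = alpha s a k * s k"
  using assms by (simp add: alpha_Suc flip: mult.assoc)

lemma mult_alpha_self:
  assumes "1 \<le> k" "s k * s k = 1"
  shows "s k * alpha s a k = alpha s a (Suc k) * s k"
  using assms by (simp add: alpha_Suc mult.assoc)

lemma mult_alpha_far:
  fixes s :: "nat \<Rightarrow> 'a::monoid_mult"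
  assumes "1 \<le> i" "i + 2 \<le> j"
    and braid: "s i * s (i + 1) * s i = s (i + 1) * s i * s (i + 1)"
    and commute_i: "s (i + 1) * alpha s a i = alpha s a i * s (i + 1)"
    and commute_far: "\<And>k. i + 2 \<le> k \<Longrightarrow> k < j \<Longrightarrow> s i * s k = s k * s i"
  shows "s i * alpha s a j = alpha s a j * s i"
  using assms(2) commute_far
proof (induction j rule: dec_induct)
  case base
  have alpha_i2: "alpha s a (Suc (Suc i)) = s (i + 1) * s i * alpha s a i * s i * s (i + 1)"
    using assms(1) by (simp add: alpha_Suc mult.assoc)
  have "s i * alpha s a (Suc (Suc i)) = (s i * s (i + 1) * s i) * alpha s a i * s i * s (i + 1)"
    by (simp add: alpha_i2 mult.assoc)
  also have "\<dots> = s (i + 1) * s i * (s (i + 1) * alpha s a i) * s i * s (i + 1)"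
    unfolding braid by (simp only: mult.assoc)
  also have "\<dots> = s (i + 1) * s i * alpha s a i * (s (i + 1) * s i * s (i + 1))"
    unfolding commute_i by (simp only: mult.assoc)
  also have "\<dots> = alpha s a (Suc (Suc i)) * s i"
    unfolding alpha_i2 braid[symmetric] by (simp only: mult.assoc)
  finally show ?case by simp
next
  case (step j)
  have "s i * alpha s a (Suc j) = (s i * s j) * alpha s a j * s j"
    using assms(1) step.hyps by (simp add: alpha_Suc mult.assoc)
  also have "\<dots> = s j * (s i * alpha s a j) * s j"
    using step by (simp add: mult.assoc)
  also have "\<dots> = s j * alpha s a j * (s i * s j)"
    using step by (simp add: mult.assoc)
  also have "\<dots> = alpha s a (Suc j) * s i"
    using assms(1) step by (simp add: alpha_Suc mult.assoc)
  finally show ?case .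
qed

theorem lemma3:
  fixes n :: nat and s :: "nat \<Rightarrow> 'a::monoid_mult" and a :: 'a
  assumes "n \<ge> 2"
    and "\<And>i. 1 \<le> i \<Longrightarrow> i \<le> n - 1 \<Longrightarrow> s i * s i = 1"
    and "\<And>i. 1 \<le> i \<Longrightarrow> i \<le> n - 2 \<Longrightarrow> (s i * s (i + 1)) ^ 3 = 1"
    and "\<And>i j. 1 \<le> i \<Longrightarrow> i \<le> n - 1 \<Longrightarrow> 1 \<le> j \<Longrightarrow> j \<le> n - 1 \<Longrightarrow>
            (i \<ge> j + 2 \<or> j \<ge> i + 2) \<Longrightarrow> (s i * s j) ^ 2 = 1"
    and "\<And>i. 2 \<le> i \<Longrightarrow> i \<le> n - 1 \<Longrightarrow> s i * a = a * s i"
  shows "\<forall>i j. 1 \<le> i \<and> i \<le> n - 1 \<and> 1 \<le> j \<and> j \<le> n \<longrightarrow>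
           s i * alpha s a j = alpha_act s a i j * s i"
proof (intro allI impI)
  fix i j assume ij: "1 \<le> i \<and> i \<le> n - 1 \<and> 1 \<le> j \<and> j \<le> n"
  have far_commute: "s k * s l = s l * s k"
    if "1 \<le> k" "k \<le> n - 1" "1 \<le> l" "l \<le> n - 1" "k \<ge> l + 2 \<or> l \<ge> k + 2" for k l
    using that by (intro involutions_commute assms(2) assms(4))
  consider "i + 1 = j" | "i = j" | "j < i" | "i + 2 \<le> j" using ij by linarith
  then show "s i * alpha s a j = alpha_act s a i j * s i"
  proof cases
    case 1
    then show ?thesis
      using ij mult_alpha_Suc[of i s a] assms(2)[of i] by (auto simp: alpha_act_def)
  next
    case 2
    then show ?thesis
      using ij mult_alpha_self[of i s a] assms(2)[of i] by (auto simp: alpha_act_def)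
  next
    case 3
    then have "s i * alpha s a j = alpha s a j * s i"
      using ij by (intro commute_alpha assms(5) far_commute) auto
    with 3 ij show ?thesis by (auto simp: alpha_act_def)
  next
    case 4
    have "s i * alpha s a j = alpha s a j * s i"
    proof (rule mult_alpha_far)
      show "s i * s (i + 1) * s i = s (i + 1) * s i * s (i + 1)"
        using 4 ij by (intro involutions_braid assms(2,3)) auto
      show "s (i + 1) * alpha s a i = alpha s a i * s (i + 1)"
        using 4 ij by (intro commute_alpha assms(5) far_commute) auto
    qed (use 4 ij in \<open>auto intro: far_commute\<close>)
    with 4 show ?thesis by (auto simp: alpha_act_def)
  qed
qed

end
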